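(* Let $n\ge 2$ be an integer and $A\subseteq L_n$. If $(X_n,\tau(A))$ is normal or countably paracompact, then $L_n\setminus A$ does not contain a closed uncountable subset of $(L_n,\tau_E|_{L_n})$.
   Context: For $\overline{x},\overline{a}\in\mathbb R^n$ let $|\overline{x}-\overline{a}|$ be the Euclidean distance and $B(\overline{a},\epsilon)=\{\overline{x}\in\mathbb R^n:|\overline{x}-\overline{a}|<\epsilon\}$. Let $P_n=\{\overline{x}\in\mathbb R^n: x_n>0\}$, $L_n=\{\overline{x}\in\mathbb R^n: x_n=0\}$, $X_n=P_n\cup L_n$, and let $\tau_E$ denote the Euclidean topology on $X_n$. For $\overline{a}\in L_n$ and $\epsilon>0$ put $\overline{a(\epsilon)}=(a_1,\dots,a_{n-1},\epsilon)$ and $\tilde B(\overline{a},\epsilon)=\{\overline{a}\}\cup B(\overline{a(\epsilon)},\epsilon)$. For $A\subseteq L_n$, the topology $\tau(A)$ on $X_n$ is generated by the local bases: at $\overline{a}\in P_n$, the sets $B(\overline{a},\epsilon)$ with $0<\epsilon<a_n$; at $\overline{a}\in A$, the sets $B(\overline{a},\epsilon)\cap X_n$ with $\epsilon>0$; at $\overline{a}\in L_n\setminus A$, the sets $\tilde B(\overline{a},\epsilon)$ with $\epsilon>0$. *)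

theory Defs
  imports "HOL-Analysis.Analysis"
begin

text \<open>Points of R^n (n = CARD('m) + 1 >= 2) are pairs (x', x_n) with x' in R^(n-1) and
  last coordinate x_n.  The product metric on this type is exactly the Euclidean metric.\<close>

type_synonym 'm pt = "(real ^ 'm) \<times> real"

definition Pn :: "'m::finite pt set" where "Pn = {p. snd p > 0}"
definition Ln :: "'m::finite pt set" where "Ln = {p. snd p = 0}"
definition Xn :: "'m::finite pt set" where "Xn = Pn \<union> Ln"

definition lift :: "'m::finite pt \<Rightarrow> real \<Rightarrow> 'm pt" where "lift a e = (fst a, e)"
definition tball :: "'m::finite pt \<Rightarrow> real \<Rightarrow> 'm pt set"
  where "tball a e = insert a (ball (lift a e) e)"

definition basic_nbhd :: "'m::finite pt set \<Rightarrow> 'm pt \<Rightarrow> 'm pt set \<Rightarrow> bool" where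
  "basic_nbhd A a V \<longleftrightarrow>
     (a \<in> Pn \<and> (\<exists>e. 0 < e \<and> e < snd a \<and> V = ball a e)) \<or>
     (a \<in> A \<and> (\<exists>e. 0 < e \<and> V = ball a e \<inter> Xn)) \<or>
     (a \<in> Ln - A \<and> (\<exists>e. 0 < e \<and> V = tball a e))"

definition tauA :: "'m::finite pt set \<Rightarrow> 'm pt topology" where
  "tauA A = topology_generated_by {V. \<exists>a. basic_nbhd A a V}"

definition countably_paracompact :: "'a topology \<Rightarrow> bool" where
  "countably_paracompact X \<longleftrightarrow>
     (\<forall>\<U>. countable \<U> \<and> (\<forall>U\<in>\<U>. openin X U) \<and> \<Union>\<U> = topspace X \<longrightarrow>
        (\<exists>\<V>. (\<forall>V\<in>\<V>. openin X V) \<and> \<Union>\<V> = topspace X \<and>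
              (\<forall>V\<in>\<V>. \<exists>U\<in>\<U>. V \<subseteq> U) \<and> locally_finite_in X \<V>))"

end

theory Submission
  imports Defs
begin

(* Let C \<subseteq> Ln - A be closed and uncountable. Its condensation points form a nonempty closed
   perfect set P with a dense injective sequence f. Every subset of P is closed in tau(A), and
   every tau(A)-neighbourhood of a point d of P contains a tangent ball tball d r. A Baire
   category argument in P shows that however radii are attached to the points f j and to the
   points e \<in> P - range f, even when j must exceed a prescribed bound depending on e, some pair
   has |f j - e| below both radii, so the two tangent balls meet. This rules out separating
   range f from P - range f by disjoint open sets, as normality would require; and it rules out
   a locally finite open refinement of the countable cover by the sets Xn - {f k, f (k + 1), ...},
   the bound at e being the largest k needed near e. *)

section \<open>Condensation points and dense sequences\<close>

definition condensation_points :: "'a::topological_space set \<Rightarrow> 'a set" where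
  "condensation_points S = {x. \<forall>U. open U \<and> x \<in> U \<longrightarrow> uncountable (U \<inter> S)}"

lemma closed_condensation_points: "closed (condensation_points S)"
proof -
  have "\<exists>U. open U \<and> x \<in> U \<and> U \<subseteq> - condensation_points S"
    if "x \<notin> condensation_points S" for x
  proof -
    from that obtain U where U: "open U" "x \<in> U" "countable (U \<inter> S)"
      unfolding condensation_points_def by blast
    then have "U \<subseteq> - condensation_points S"
      unfolding condensation_points_def by blast
    with U show ?thesis
      by blast
  qed
  then show ?thesis
    unfolding closed_def open_subopen[of "- condensation_points S"] by blast
qed

lemma condensation_points_subset:
  assumes "closed S"
  shows "condensation_points S \<subseteq> S"
proof
  fix x assume x: "x \<in> condensation_points S"
  show "x \<in> S"
  proof (rule ccontr)
    assume "x \<notin> S"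
    with x assms have "uncountable (- S \<inter> S)"
      unfolding condensation_points_def closed_def by blast
    then show False
      by simp
  qed
qed

lemma countable_Diff_condensation_points:
  fixes S :: "'a::second_countable_topology set"
  shows "countable (S - condensation_points S)"
proof -
  define \<F> where "\<F> = {U. open U \<and> countable (U \<inter> S)}"
  obtain \<F>' where \<F>': "\<F>' \<subseteq> \<F>" "countable \<F>'" "\<Union>\<F>' = \<Union>\<F>"
    by (rule Lindelof[of \<F>]) (simp_all add: \<F>_def)
  have "S - condensation_points S \<subseteq> (\<Union>U\<in>\<F>'. U \<inter> S)"
  proof
    fix x assume "x \<in> S - condensation_points S"
    then obtain U where "open U" "x \<in> U" "countable (U \<inter> S)"
      by (auto simp: condensation_points_def)
    then have "x \<in> \<Union>\<F>'"
      unfolding \<F>'(3) \<F>_def by blast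
    with \<open>x \<in> S - condensation_points S\<close> show "x \<in> (\<Union>U\<in>\<F>'. U \<inter> S)"
      by blast
  qed
  moreover have "countable (\<Union>U\<in>\<F>'. U \<inter> S)"
    using \<F>'(1) by (intro countable_UN[OF \<F>'(2)]) (auto simp: \<F>_def)
  ultimately show ?thesis
    by (rule countable_subset)
qed

lemma uncountable_condensation_points:
  fixes S :: "'a::second_countable_topology set"
  assumes "x \<in> condensation_points S" "open U" "x \<in> U"
  shows "uncountable (U \<inter> condensation_points S)"
proof
  assume "countable (U \<inter> condensation_points S)"
  then have "countable (U \<inter> condensation_points S \<union> (S - condensation_points S))"
    by (simp add: countable_Diff_condensation_points)
  then have "countable (U \<inter> S)"
    by (rule countable_subset[rotated]) blast
  with assms show False
    by (auto simp: condensation_points_def)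
qed

lemma condensation_point_islimpt:
  fixes S :: "'a::second_countable_topology set"
  assumes "x \<in> condensation_points S"
  shows "x islimpt condensation_points S"
proof (rule islimptI)
  fix U assume "x \<in> U" "open U"
  then have "uncountable (U \<inter> condensation_points S)"
    using assms by (intro uncountable_condensation_points)
  then have "infinite (U \<inter> condensation_points S - {x})"
    by (intro infinite_remove uncountable_infinite)
  then obtain y where "y \<in> U \<inter> condensation_points S - {x}"
    using infinite_imp_nonempty by blast
  then show "\<exists>y\<in>condensation_points S. y \<in> U \<and> y \<noteq> x"
    by blast
qed

lemma perfect_set_dense_sequence:
  fixes P :: "'a::{metric_space, second_countable_topology} set"
  assumes "P \<noteq> {}" "\<forall>x\<in>P. x islimpt P"
  obtains f :: "nat \<Rightarrow> 'a" where "inj f" "range f \<subseteq> P" "P \<subseteq> closure (range f)"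
proof -
  obtain T where T: "countable T" "T \<subseteq> P" "P \<subseteq> closure T"
    by (rule separable)
  have "infinite T"
  proof
    assume "finite T"
    then have "P \<subseteq> T"
      using T(3) by (simp add: finite_imp_closed closure_closed)
    with \<open>finite T\<close> have "finite P"
      by (rule finite_subset[rotated])
    with assms show False
      using islimpt_finite by blast
  qed
  then have bij: "bij_betw (from_nat_into T) UNIV T"
    using T(1) by (rule bij_betw_from_nat_into[rotated])
  show ?thesis
  proof
    show "inj (from_nat_into T)"
      using bij by (rule bij_betw_imp_inj_on)
    show "range (from_nat_into T) \<subseteq> P" "P \<subseteq> closure (range (from_nat_into T))"
      using bij_betw_imp_surj_on[OF bij] T(2,3) by simp_all
  qed
qed

lemma closed_uncountable_perfect_subset:
  fixes C :: "'a::{metric_space, second_countable_topology} set"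
  assumes "closed C" "uncountable C"
  obtains P and f :: "nat \<Rightarrow> 'a"
  where "closed P" "P \<subseteq> C" "\<forall>x\<in>P. x islimpt P"
    and "inj f" "range f \<subseteq> P" "P \<subseteq> closure (range f)"
proof -
  define P where "P = condensation_points C"
  have "P \<noteq> {}"
    using countable_Diff_condensation_points[of C] assms(2) unfolding P_def by auto
  moreover have "\<forall>x\<in>P. x islimpt P"
    unfolding P_def using condensation_point_islimpt by blast
  ultimately obtain f :: "nat \<Rightarrow> 'a" where "inj f" "range f \<subseteq> P" "P \<subseteq> closure (range f)"
    by (rule perfect_set_dense_sequence)
  moreover have "closed P" "P \<subseteq> C"
    unfolding P_def using closed_condensation_points condensation_points_subset[OF assms(1)]
    by blast+
  ultimately show ?thesis
    using \<open>\<forall>x\<in>P. x islimpt P\<close> that by blast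
qed

section \<open>A Baire category lemma\<close>

lemma perfect_set_subset_closure_tail:
  fixes P :: "'a::t1_space set" and f :: "nat \<Rightarrow> 'a"
  assumes "\<forall>x\<in>P. x islimpt P" "P \<subseteq> closure (range f)"
  shows "P \<subseteq> closure (f ` {k..})"
proof
  fix x assume "x \<in> P"
  have "{..<k} \<union> {k..} = UNIV"
    by (auto simp: not_le)
  then have "range f = f ` {..<k} \<union> f ` {k..}"
    by (simp flip: image_Un)
  then have "P \<subseteq> f ` {..<k} \<union> closure (f ` {k..})"
    using assms(2) by (simp add: finite_imp_closed closure_closed)
  with assms(1) \<open>x \<in> P\<close> have "x islimpt f ` {..<k} \<union> closure (f ` {k..})"
    by (auto intro: islimpt_subset)
  then have "x islimpt closure (f ` {k..})"
    by (simp add: islimpt_Un_finite)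
  then show "x \<in> closure (f ` {k..})"
    by (meson closed_closure closed_limpt)
qed

lemma perfect_set_point_outside_closures:
  fixes P :: "'a::{real_normed_vector, heine_borel} set" and f :: "nat \<Rightarrow> 'a"
  assumes "closed P" "\<forall>x\<in>P. x islimpt P" "range f \<subseteq> P" "P \<subseteq> closure (range f)"
    and "countable \<S>" "\<forall>S\<in>\<S>. \<exists>k. f ` {k..} \<inter> closure S = {}"
  obtains x where "x \<in> P" "\<forall>S\<in>\<S>. x \<notin> closure S"
proof -
  define \<G> where "\<G> = insert P ((\<lambda>S. P - closure S) ` \<S>)"
  have "openin (top_of_set P) T \<and> P \<subseteq> closure T" if "T \<in> \<G>" for T
  proof (cases "T = P")
    case False
    then obtain S k where T: "T = P - closure S" and tail: "f ` {k..} \<inter> closure S = {}"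
      using \<open>T \<in> \<G>\<close> assms(6) unfolding \<G>_def by blast
    have "openin (top_of_set P) T"
      unfolding T by (simp add: Diff_eq openin_open_Int open_Compl)
    moreover have "f ` {k..} \<subseteq> T"
      using tail assms(3) unfolding T by auto
    then have "P \<subseteq> closure T"
      using perfect_set_subset_closure_tail[OF assms(2,4)] closure_mono by blast
    ultimately show ?thesis
      by blast
  qed (simp add: closure_subset)
  then have "P \<subseteq> closure (\<Inter>\<G>)"
    using assms(1,5) by (intro Baire) (auto simp: \<G>_def)
  moreover have "P \<noteq> {}"
    using assms(3) by blast
  ultimately obtain x where "x \<in> \<Inter>\<G>"
    by (metis closure_empty ex_in_conv subset_empty)
  then have "x \<in> P" "\<forall>S\<in>\<S>. x \<notin> closure S"
    unfolding \<G>_def by blast+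
  with that show ?thesis
    by blast
qed

lemma dense_sequence_close_to_nonmember:
  fixes P :: "'a::{real_normed_vector, heine_borel} set" and f :: "nat \<Rightarrow> 'a"
  assumes "closed P" "\<forall>x\<in>P. x islimpt P" "inj f" "range f \<subseteq> P" "P \<subseteq> closure (range f)"
    and "\<forall>j. 0 < \<sigma> j" "\<forall>e\<in>P - range f. 0 < \<rho> e"
  obtains j e where "e \<in> P - range f" "\<kappa> e \<le> j" "dist (f j) e < min (\<sigma> j) (\<rho> e)"
proof -
  (* Otherwise every tail f ` {k..} stays away from the sets E k m below, so by Baire some
     x \<in> P - range f lies outside all their closures, although x \<in> E (\<kappa> x) m for m large. *)
  have "\<exists>j e. e \<in> P - range f \<and> \<kappa> e \<le> j \<and> dist (f j) e < min (\<sigma> j) (\<rho> e)"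
  proof (rule ccontr)
    assume "\<not> ?thesis"
    then have far: "min (\<sigma> j) (\<rho> e) \<le> dist (f j) e" if "e \<in> P - range f" "\<kappa> e \<le> j" for j e
      using that by (meson not_le)
    define E where "E k m = {e \<in> P - range f. \<kappa> e = k \<and> 1 / Suc m \<le> \<rho> e}" for k m :: nat
    have "f j \<notin> closure (E k m)" if "k \<le> j" for j k m
    proof
      assume "f j \<in> closure (E k m)"
      then obtain w where w: "w \<in> E k m" "dist w (f j) < min (\<sigma> j) (1 / Suc m)"
        using assms(6) unfolding closure_approachable by (metis min_less_iff_conj of_nat_0_less_iff
          zero_less_Suc zero_less_divide_1_iff)
      then have "dist (f j) w < min (\<sigma> j) (\<rho> w)"
        by (auto simp: E_def dist_commute)
      moreover have "min (\<sigma> j) (\<rho> w) \<le> dist (f j) w"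
        using w(1) \<open>k \<le> j\<close> by (intro far) (auto simp: E_def)
      ultimately show False
        by (simp add: min_le_iff_disj)
    qed
    then have tail_E: "f ` {k..} \<inter> closure (E k m) = {}" for k m
      by auto
    have tail_point: "f ` {Suc j..} \<inter> closure {f j} = {}" for j
      using \<open>inj f\<close> by (auto dest: injD)
    let ?\<S> = "(\<Union>k. range (E k)) \<union> range (\<lambda>j. {f j})"
    have "countable ?\<S>"
      by simp
    moreover have "\<forall>S\<in>?\<S>. \<exists>k. f ` {k..} \<inter> closure S = {}"
      using tail_E tail_point by blast
    ultimately obtain x where "x \<in> P" and x: "\<forall>S\<in>?\<S>. x \<notin> closure S"
      by (rule perfect_set_point_outside_closures[OF assms(1,2,4,5)])
    then have "x \<notin> closure {f j}" for j
      by blast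
    with \<open>x \<in> P\<close> have "x \<in> P - range f"
      by auto
    then obtain m where "1 / Suc m < \<rho> x"
      using assms(7) reals_Archimedean by (metis inverse_eq_divide)
    with \<open>x \<in> P - range f\<close> have "x \<in> E (\<kappa> x) m"
      by (simp add: E_def)
    moreover have "x \<notin> closure (E (\<kappa> x) m)"
      using x by blast
    ultimately show False
      using closure_subset by blast
  qed
  with that show ?thesis
    by blast
qed

section \<open>Tangent balls\<close>

lemma ball_Int_ball_nonempty:
  fixes x y :: "'a::real_normed_vector"
  assumes "dist x y < r + s" "0 < r" "0 < s"
  shows "ball x r \<inter> ball y s \<noteq> {}"
proof -
  define u where "u = r / (r + s)"
  define z where "z = x + u *\<^sub>R (y - x)"
  have u: "0 < u" "0 < 1 - u" "u * (r + s) = r" "(1 - u) * (r + s) = s"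
    using assms by (simp_all add: u_def field_simps)
  have "dist x z = u * dist x y"
    using u by (simp add: z_def dist_norm norm_minus_commute)
  also have "\<dots> < u * (r + s)"
    using assms(1) u(1) by simp
  finally have "z \<in> ball x r"
    using u by simp
  have "y - z = (1 - u) *\<^sub>R (y - x)"
    by (simp add: z_def algebra_simps)
  then have "dist y z = (1 - u) * dist x y"
    using u(2) by (simp add: dist_norm norm_minus_commute)
  also have "\<dots> < (1 - u) * (r + s)"
    using assms(1) u(2) by simp
  finally have "z \<in> ball y s"
    using assms u by simp
  with \<open>z \<in> ball x r\<close> show ?thesis
    by blast
qed

lemma closed_Ln: "closed Ln"
  unfolding Ln_def by (intro closed_Collect_eq continuous_intros)

lemma ball_subset_Pn:
  assumes "e \<le> snd a"
  shows "ball a e \<subseteq> Pn"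
proof
  fix z assume "z \<in> ball a e"
  then have "dist (snd a) (snd z) < e"
    using dist_snd_le[of a z] by simp
  with assms show "z \<in> Pn"
    by (simp add: Pn_def dist_real_def)
qed

lemma ball_lift_subset_Pn: "ball (lift a r) r \<subseteq> Pn"
  by (rule ball_subset_Pn) (simp add: lift_def)

lemma tball_subset_Xn: "a \<in> Ln \<Longrightarrow> tball a r \<subseteq> Xn"
  using ball_lift_subset_Pn by (fastforce simp: tball_def Xn_def)

lemma tball_Int_Ln: "tball a r \<inter> Ln \<subseteq> {a}"
  using ball_lift_subset_Pn by (fastforce simp: tball_def Ln_def Pn_def)

lemma tball_mono:
  assumes "r \<le> s"
  shows "tball a r \<subseteq> tball a s"
proof -
  have "dist (lift a s) (lift a r) = s - r"
    using assms by (simp add: lift_def dist_Pair_Pair dist_real_def)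
  then have "ball (lift a r) r \<subseteq> ball (lift a s) s"
    by (simp add: ball_subset_ball_iff dist_commute)
  then show ?thesis
    by (auto simp: tball_def)
qed

lemma tball_subset_ball:
  assumes "a \<in> Ln" "0 < r"
  shows "tball a r \<subseteq> ball a (2 * r)"
proof -
  have "dist a (lift a r) = r"
    using assms by (cases a) (simp add: Ln_def lift_def dist_Pair_Pair)
  then have "ball (lift a r) r \<subseteq> ball a (2 * r)"
    by (simp add: ball_subset_ball_iff dist_commute)
  with assms show ?thesis
    by (auto simp: tball_def)
qed

(* The centres lift d r and lift e s are at distance sqrt (dist d e ^ 2 + (r - s)\<^sup>2), which is
   below r + s exactly when dist d e ^ 2 < 4 * r * s. *)
lemma tball_Int_tball_nonempty:
  assumes "d \<in> Ln" "e \<in> Ln" "0 < r" "0 < s" "dist d e ^ 2 < 4 * r * s"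
  shows "tball d r \<inter> tball e s \<noteq> {}"
proof -
  have "dist (lift d r) (lift e s) ^ 2 = dist d e ^ 2 + (r - s) ^ 2"
    using assms(1,2) by (simp add: Ln_def lift_def dist_Pair_Pair dist_prod_def dist_real_def)
  also have "\<dots> < (r + s) ^ 2"
    using assms(5) by (simp add: power2_eq_square algebra_simps)
  finally have "dist (lift d r) (lift e s) < r + s"
    using assms(3,4) by (simp add: power_less_imp_less_base)
  then show ?thesis
    using ball_Int_ball_nonempty assms(3,4) by (fastforce simp: tball_def)
qed

section \<open>The topology tau(A)\<close>

lemma basic_nbhd_subset_Xn:
  assumes "basic_nbhd A a V"
  shows "V \<subseteq> Xn"
  using assms unfolding basic_nbhd_def
proof (elim disjE conjE exE)
  fix e assume "e < snd a" "V = ball a e"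
  then show ?thesis
    using ball_subset_Pn[of e a] by (auto simp: Xn_def)
qed (use tball_subset_Xn in blast)+

lemma basic_nbhd_Pn: "a \<in> Pn \<Longrightarrow> basic_nbhd A a (ball a (snd a / 2))"
  unfolding basic_nbhd_def Pn_def by (intro disjI1 conjI exI[of _ "snd a / 2"]) auto

lemma basic_nbhd_A: "a \<in> A \<Longrightarrow> 0 < e \<Longrightarrow> basic_nbhd A a (ball a e \<inter> Xn)"
  unfolding basic_nbhd_def by blast

lemma basic_nbhd_tball: "a \<in> Ln - A \<Longrightarrow> 0 < e \<Longrightarrow> basic_nbhd A a (tball a e)"
  unfolding basic_nbhd_def by blast

lemma openin_tauA_basic: "basic_nbhd A a V \<Longrightarrow> openin (tauA A) V"
  unfolding tauA_def openin_topology_generated_by_iff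
  by (rule generate_topology_on.Basis) blast

lemma topspace_tauA: "topspace (tauA A) = Xn"
proof -
  have "\<exists>V. basic_nbhd A a V \<and> a \<in> V" if a: "a \<in> Xn" for a
  proof -
    consider "a \<in> Pn" | "a \<in> A" | "a \<in> Ln - A"
      using a unfolding Xn_def by blast
    then show ?thesis
    proof cases
      case 1
      then show ?thesis
        using basic_nbhd_Pn by (fastforce simp: Pn_def)
    next
      case 2
      then show ?thesis
        using basic_nbhd_A[of a A 1] \<open>a \<in> Xn\<close> by auto
    next
      case 3
      then show ?thesis
        using basic_nbhd_tball[of a A 1] by (auto simp: tball_def)
    qed
  qed
  then show ?thesis
    using basic_nbhd_subset_Xn unfolding tauA_def topology_generated_by_topspace by blast
qed

lemma openin_tauA_Pn:
  fixes A :: "'m::finite pt set"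
  shows "openin (tauA A) Pn"
proof (subst openin_subopen, intro ballI)
  fix x :: "'m pt" assume "x \<in> Pn"
  then have "0 < snd x"
    by (simp add: Pn_def)
  then have "ball x (snd x / 2) \<subseteq> Pn" "x \<in> ball x (snd x / 2)"
    by (simp_all add: ball_subset_Pn)
  with basic_nbhd_Pn[OF \<open>x \<in> Pn\<close>, THEN openin_tauA_basic] show "\<exists>T. openin (tauA A) T \<and> x \<in> T \<and> T \<subseteq> Pn"
    by blast
qed

lemma basic_nbhd_contains_tball:
  assumes "basic_nbhd A a V" "d \<in> V" "d \<in> Ln"
  shows "\<exists>r>0. tball d r \<subseteq> V"
  using assms(1) unfolding basic_nbhd_def
proof (elim disjE conjE exE)
  fix e assume "e < snd a" "V = ball a e"
  with assms(2,3) show ?thesis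
    using ball_subset_Pn[of e a] by (auto simp: Pn_def Ln_def)
next
  fix e assume "V = ball a e \<inter> Xn"
  define r where "r = (e - dist a d) / 2"
  have "0 < r"
    using assms(2) \<open>V = ball a e \<inter> Xn\<close> by (simp add: r_def)
  have "dist d a + 2 * r \<le> e"
    by (simp add: r_def dist_commute field_simps)
  then have "ball d (2 * r) \<subseteq> ball a e"
    by (simp add: ball_subset_ball_iff)
  then have "tball d r \<subseteq> V"
    using tball_subset_ball[OF assms(3) \<open>0 < r\<close>] tball_subset_Xn[OF assms(3)] \<open>V = ball a e \<inter> Xn\<close>
    by blast
  with \<open>0 < r\<close> show ?thesis
    by blast
next
  fix e assume "0 < e" "V = tball a e"
  with assms(2,3) have "d = a"
    using tball_Int_Ln[of a e] by blast
  with \<open>0 < e\<close> \<open>V = tball a e\<close> show ?thesis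
    by blast
qed

lemma openin_tauA_contains_tball:
  assumes "openin (tauA A) U" "d \<in> U" "d \<in> Ln"
  shows "\<exists>r>0. tball d r \<subseteq> U"
proof -
  have "generate_topology_on {V. \<exists>a. basic_nbhd A a V} U"
    using assms(1) unfolding tauA_def openin_topology_generated_by_iff .
  then show ?thesis
    using assms(2,3)
  proof (induction arbitrary: d)
    case Empty
    then show ?case
      by simp
  next
    case (Int U V)
    then obtain r s where "0 < r" "tball d r \<subseteq> U" "0 < s" "tball d s \<subseteq> V"
      by blast
    then have "tball d (min r s) \<subseteq> U \<inter> V"
      using tball_mono[of "min r s" r d] tball_mono[of "min r s" s d] by auto
    with \<open>0 < r\<close> \<open>0 < s\<close> show ?case
      by (intro exI[of _ "min r s"]) auto
  next
    case (UN K)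
    then show ?case
      by blast
  next
    case (Basis V)
    then show ?case
      using basic_nbhd_contains_tball by blast
  qed
qed

lemma closedin_tauA_subset_closed:
  assumes "closed T" "T \<subseteq> Ln - A" "S \<subseteq> T"
  shows "closedin (tauA A) S"
proof -
  have "\<exists>V. openin (tauA A) V \<and> x \<in> V \<and> V \<subseteq> Xn - S" if x: "x \<in> Xn - S" for x
  proof -
    consider "x \<in> Pn" | "x \<in> A" | "x \<in> Ln - A"
      using x unfolding Xn_def by blast
    then show ?thesis
    proof cases
      case 1
      moreover have "Pn \<inter> S = {}"
        using assms by (auto simp: Pn_def Ln_def)
      ultimately show ?thesis
        using openin_tauA_Pn by (intro exI[of _ Pn]) (auto simp: Xn_def)
    next
      case 2
      then have "x \<in> - T"
        using assms(2) by blast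
      then obtain e where "0 < e" "ball x e \<subseteq> - T"
        using assms(1) open_contains_ball by (metis open_Compl)
      then show ?thesis
        using 2 x assms(3) basic_nbhd_A[OF 2 \<open>0 < e\<close>, THEN openin_tauA_basic]
        by (intro exI[of _ "ball x e \<inter> Xn"]) auto
    next
      case 3
      then have "tball x 1 \<subseteq> Xn - S"
        using x assms tball_subset_Xn[of x 1] tball_Int_Ln[of x 1] by blast
      then show ?thesis
        using basic_nbhd_tball[OF 3, of 1, THEN openin_tauA_basic]
        by (intro exI[of _ "tball x 1"]) (auto simp: tball_def)
    qed
  qed
  then have "openin (tauA A) (Xn - S)"
    by (subst openin_subopen) blast
  moreover have "S \<subseteq> Xn"
    using assms by (auto simp: Xn_def)
  ultimately show ?thesis
    by (simp add: closedin_def topspace_tauA)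
qed

section \<open>tau(A) is neither normal nor countably paracompact\<close>

lemma locally_finite_in_disjoint_from_decseq:
  assumes "locally_finite_in X \<V>" "\<forall>V\<in>\<V>. \<exists>k. V \<inter> F k = {}" "decseq F"
  obtains W \<kappa> where "\<forall>x\<in>topspace X. openin X (W x) \<and> x \<in> W x \<and>
    (\<forall>V\<in>\<V>. V \<inter> W x \<noteq> {} \<longrightarrow> V \<inter> F (\<kappa> x) = {})"
proof -
  from bchoice[OF assms(2)] obtain k where k: "\<forall>V\<in>\<V>. V \<inter> F (k V) = {}"
    by blast
  have "\<forall>x\<in>topspace X. \<exists>W K. openin X W \<and> x \<in> W \<and> (\<forall>V\<in>\<V>. V \<inter> W \<noteq> {} \<longrightarrow> V \<inter> F K = {})"
  proof
    fix x assume "x \<in> topspace X"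
    then obtain W where W: "openin X W" "x \<in> W" "finite {V \<in> \<V>. V \<inter> W \<noteq> {}}"
      using assms(1) unfolding locally_finite_in_def by blast
    then have "finite (k ` {V \<in> \<V>. V \<inter> W \<noteq> {}})"
      by simp
    then obtain K where K: "\<forall>V\<in>{V \<in> \<V>. V \<inter> W \<noteq> {}}. k V \<le> K"
      unfolding finite_nat_set_iff_bounded_le by blast
    have "V \<inter> F K = {}" if "V \<in> \<V>" "V \<inter> W \<noteq> {}" for V
      using k K that decseqD[OF assms(3), of "k V" K] by blast
    with W(1,2) show "\<exists>W K. openin X W \<and> x \<in> W \<and> (\<forall>V\<in>\<V>. V \<inter> W \<noteq> {} \<longrightarrow> V \<inter> F K = {})"
      by blast
  qed
  from bchoice[OF this] obtain W where "\<forall>x\<in>topspace X. \<exists>K. openin X (W x) \<and> x \<in> W x \<and>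
      (\<forall>V\<in>\<V>. V \<inter> W x \<noteq> {} \<longrightarrow> V \<inter> F K = {})"
    by blast
  from bchoice[OF this] obtain \<kappa> where "\<forall>x\<in>topspace X. openin X (W x) \<and> x \<in> W x \<and>
      (\<forall>V\<in>\<V>. V \<inter> W x \<noteq> {} \<longrightarrow> V \<inter> F (\<kappa> x) = {})"
    by blast
  then show ?thesis
    by (rule that)
qed

lemma UN_Diff_tails:
  fixes f :: "nat \<Rightarrow> 'a"
  assumes "inj f"
  shows "(\<Union>k. X - f ` {k..}) = X"
proof -
  have "\<exists>k. x \<notin> f ` {k..}" for x
  proof (cases "x \<in> range f")
    case True
    then obtain j where "x = f j"
      by blast
    with assms have "x \<notin> f ` {Suc j..}"
      by (auto dest: injD)
    then show ?thesis ..
  qed auto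
  then show ?thesis
    by blast
qed

context
  fixes A :: "'m::finite pt set" and P :: "'m pt set" and f :: "nat \<Rightarrow> 'm pt"
  assumes P: "closed P" "P \<subseteq> Ln - A" "\<forall>x\<in>P. x islimpt P"
    and f: "inj f" "range f \<subseteq> P" "P \<subseteq> closure (range f)"
begin

lemma nbhds_of_dense_sequence_meet:
  assumes "\<forall>j. openin (tauA A) (U j) \<and> f j \<in> U j"
    and "\<forall>e\<in>P - range f. openin (tauA A) (V e) \<and> e \<in> V e"
  obtains j e where "e \<in> P - range f" "\<kappa> e \<le> j" "U j \<inter> V e \<noteq> {}"
proof -
  have "P \<subseteq> Ln" "range f \<subseteq> Ln"
    using P(2) f(2) by blast+
  have "\<forall>j. \<exists>r. 0 < r \<and> tball (f j) r \<subseteq> U j"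
    using assms(1) \<open>range f \<subseteq> Ln\<close> by (blast intro: openin_tauA_contains_tball)
  then obtain \<sigma> where \<sigma>: "\<forall>j. 0 < \<sigma> j \<and> tball (f j) (\<sigma> j) \<subseteq> U j"
    by (auto dest: choice)
  have "\<forall>e\<in>P - range f. \<exists>r. 0 < r \<and> tball e r \<subseteq> V e"
    using assms(2) \<open>P \<subseteq> Ln\<close> by (blast intro: openin_tauA_contains_tball)
  then obtain \<rho> where \<rho>: "\<forall>e\<in>P - range f. 0 < \<rho> e \<and> tball e (\<rho> e) \<subseteq> V e"
    by (auto dest: bchoice)
  obtain j e where je: "e \<in> P - range f" "\<kappa> e \<le> j" "dist (f j) e < min (\<sigma> j) (\<rho> e)"
    by (rule dense_sequence_close_to_nonmember[OF P(1,3) f, where \<sigma>=\<sigma> and \<rho>=\<rho> and \<kappa>=\<kappa>])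
      (use \<sigma> \<rho> in auto)
  have "dist (f j) e ^ 2 < \<sigma> j * \<rho> e"
    using je(3) by (simp add: power2_eq_square mult_strict_mono')
  also have "\<dots> < 4 * \<sigma> j * \<rho> e"
    using \<sigma> \<rho> je(1) by simp
  finally have "tball (f j) (\<sigma> j) \<inter> tball e (\<rho> e) \<noteq> {}"
    using \<sigma> \<rho> je(1) \<open>P \<subseteq> Ln\<close> \<open>range f \<subseteq> Ln\<close> by (intro tball_Int_tball_nonempty) auto
  then have "U j \<inter> V e \<noteq> {}"
    using \<sigma> \<rho> je(1) by blast
  with je(1,2) that show ?thesis
    by blast
qed

lemma not_normal_space_tauA: "\<not> normal_space (tauA A)"
proof
  assume "normal_space (tauA A)"
  moreover have "closedin (tauA A) (range f)"
    using f(2) by (rule closedin_tauA_subset_closed[OF P(1,2)])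
  moreover have "closedin (tauA A) (P - range f)"
    by (rule closedin_tauA_subset_closed[OF P(1,2)]) blast
  moreover have "disjnt (range f) (P - range f)"
    by (simp add: disjnt_def)
  ultimately obtain U V where UV: "openin (tauA A) U" "openin (tauA A) V"
    "range f \<subseteq> U" "P - range f \<subseteq> V" "disjnt U V"
    unfolding normal_space_def by meson
  have "U \<inter> V \<noteq> {}"
    by (rule nbhds_of_dense_sequence_meet[of "\<lambda>_. U" "\<lambda>_. V" "\<lambda>_. 0"]) (use UV in auto)
  with UV(5) show False
    by (simp add: disjnt_def)
qed

lemma not_countably_paracompact_tauA: "\<not> countably_paracompact (tauA A)"
proof
  assume cp: "countably_paracompact (tauA A)"
  define F where "F k = f ` {k..}" for k
  have "openin (tauA A) (Xn - F k)" for k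
  proof -
    have "closedin (tauA A) (F k)"
      using f(2) by (intro closedin_tauA_subset_closed[OF P(1,2)]) (auto simp: F_def)
    then show ?thesis
      by (metis closedin_def topspace_tauA)
  qed
  moreover have "(\<Union>k. Xn - F k) = Xn"
    unfolding F_def using f(1) by (rule UN_Diff_tails)
  ultimately obtain \<V> where \<V>: "\<forall>V\<in>\<V>. openin (tauA A) V" "\<Union>\<V> = Xn"
    "\<forall>V\<in>\<V>. \<exists>U\<in>range (\<lambda>k. Xn - F k). V \<subseteq> U" "locally_finite_in (tauA A) \<V>"
    using cp[unfolded countably_paracompact_def topspace_tauA, rule_format, of "range (\<lambda>k. Xn - F k)"]
    by auto
  have "\<forall>V\<in>\<V>. \<exists>k. V \<inter> F k = {}"
    using \<V>(3) by blast
  moreover have "decseq F"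
    unfolding F_def decseq_def by auto
  ultimately obtain W \<kappa> where W: "\<forall>x\<in>Xn. openin (tauA A) (W x) \<and> x \<in> W x \<and>
      (\<forall>V\<in>\<V>. V \<inter> W x \<noteq> {} \<longrightarrow> V \<inter> F (\<kappa> x) = {})"
    by (rule locally_finite_in_disjoint_from_decseq[OF \<V>(4)]) (simp add: topspace_tauA)
  have "P \<subseteq> Xn"
    using P(2) by (auto simp: Xn_def)
  then have "\<forall>j. \<exists>V. V \<in> \<V> \<and> f j \<in> V"
    using f(2) \<V>(2) by blast
  from choice[OF this] obtain U where U: "\<forall>j. U j \<in> \<V> \<and> f j \<in> U j"
    by blast
  obtain j e where je: "e \<in> P - range f" "\<kappa> e \<le> j" "U j \<inter> W e \<noteq> {}"
    by (rule nbhds_of_dense_sequence_meet[of U W \<kappa>]) (use U W \<V>(1) \<open>P \<subseteq> Xn\<close> in auto)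
  then have "U j \<inter> F (\<kappa> e) = {}"
    using U W \<open>P \<subseteq> Xn\<close> by blast
  moreover have "f j \<in> U j \<inter> F (\<kappa> e)"
    using U je(2) by (auto simp: F_def)
  ultimately show False
    by blast
qed

end

theorem mainTheorem19:
  fixes A :: "('m::finite) pt set"
  assumes "A \<subseteq> Ln"
    and "normal_space (tauA A) \<or> countably_paracompact (tauA A)"
  shows "\<not> (\<exists>C. C \<subseteq> Ln - A \<and> closedin (subtopology euclidean Ln) C \<and> uncountable C)"
proof
  assume "\<exists>C. C \<subseteq> Ln - A \<and> closedin (subtopology euclidean Ln) C \<and> uncountable C"
  then obtain C where C: "C \<subseteq> Ln - A" "closedin (top_of_set Ln) C" "uncountable C"
    by blast
  have "closed C"
    using C(2) closed_Ln closedin_closed_trans by blast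
  then obtain P and f :: "nat \<Rightarrow> 'm pt" where P: "closed P" "P \<subseteq> C" "\<forall>x\<in>P. x islimpt P"
    and f: "inj f" "range f \<subseteq> P" "P \<subseteq> closure (range f)"
    using C(3) by (rule closed_uncountable_perfect_subset)
  with C(1) have "P \<subseteq> Ln - A"
    by blast
  with assms(2) P f show False
    using not_normal_space_tauA not_countably_paracompact_tauA by blast
qed

end
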